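(* The Lie algebra $T^*\mathfrak{su}(2)$ has no 5-dimensional Lie subalgebra. Moreover, if $\mathfrak{h}$ is a 4-dimensional Lie subalgebra of $T^*\mathfrak{su}(2)$ which is degenerate with respect to the canonical quadratic form, then there exists an automorphism $F$ of $\mathfrak{su}(2)$ such that $T^*F(\mathfrak{h})=\mathbb{R}e_1\oplus\mathfrak{su}(2)^*$.
   Context: $(e_1,e_2,e_3)$ is the basis of $\mathfrak{su}(2)$ given by $e_1=\frac12\begin{pmatrix}0&i\\ i&0\end{pmatrix}$, $e_2=\frac12\begin{pmatrix}0&1\\-1&0\end{pmatrix}$, $e_3=\frac12\begin{pmatrix}-i&0\\0&i\end{pmatrix}$, with $[e_1,e_2]=e_3$, $[e_2,e_3]=e_1$, $[e_3,e_1]=e_2$. For a Lie algebra $\mathfrak{g}$, $T^*\mathfrak{g}=\mathfrak{g}\oplus\mathfrak{g}^*$ with bracket $[u+\alpha,v+\beta]=[u,v]+\mathrm{ad}_u^*\beta-\mathrm{ad}_v^*\alpha$, where $(\mathrm{ad}_u^*\alpha)(v)=-\alpha([u,v])$, and canonical quadratic form $\langle u+\alpha,v+\beta\rangle=\alpha(v)+\beta(u)$. For an automorphism $F$ of $\mathfrak{g}$, $T^*F$ is the automorphism $u+\alpha\mapsto F(u)+(F^{-1})^*\alpha$ of $T^*\mathfrak{g}$. A subspace is degenerate if the restriction of the form to it is degenerate. *)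

theory Defs
  imports "HOL-Analysis.Analysis"
begin

text \<open>su(2) in coordinates w.r.t. the basis (e1,e2,e3): u = u$1 e1 + u$2 e2 + u$3 e3.
  The bracket is determined by [e1,e2]=e3, [e2,e3]=e1, [e3,e1]=e2.\<close>
type_synonym su2 = "real^3"

definition su2_e :: "3 \<Rightarrow> su2" where
  "su2_e i = axis i 1"

definition su2_bracket :: "su2 \<Rightarrow> su2 \<Rightarrow> su2" where
  "su2_bracket u v = vector [u$2 * v$3 - u$3 * v$2, u$3 * v$1 - u$1 * v$3, u$1 * v$2 - u$2 * v$1]"

text \<open>su(2)^* in coordinates w.r.t. the dual basis: alpha(v) = alpha \<bullet> v.\<close>
definition dual_apply :: "su2 \<Rightarrow> su2 \<Rightarrow> real" where
  "dual_apply \<alpha> v = \<alpha> \<bullet> v"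

definition coad :: "su2 \<Rightarrow> su2 \<Rightarrow> su2" where
  "coad u \<alpha> = (\<chi> i. - dual_apply \<alpha> (su2_bracket u (su2_e i)))"

type_synonym tsu2 = "su2 \<times> su2"

definition tstar_bracket :: "tsu2 \<Rightarrow> tsu2 \<Rightarrow> tsu2" where
  "tstar_bracket x y = (case x of (u, \<alpha>) \<Rightarrow> case y of (v, \<beta>) \<Rightarrow>
      (su2_bracket u v, coad u \<beta> - coad v \<alpha>))"

definition tstar_form :: "tsu2 \<Rightarrow> tsu2 \<Rightarrow> real" where
  "tstar_form x y = (case x of (u, \<alpha>) \<Rightarrow> case y of (v, \<beta>) \<Rightarrow>
      dual_apply \<alpha> v + dual_apply \<beta> u)"

definition tstar_subalgebra :: "tsu2 set \<Rightarrow> bool" where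
  "tstar_subalgebra h \<longleftrightarrow> subspace h \<and> (\<forall>x\<in>h. \<forall>y\<in>h. tstar_bracket x y \<in> h)"

definition tstar_degenerate :: "tsu2 set \<Rightarrow> bool" where
  "tstar_degenerate h \<longleftrightarrow> (\<exists>x\<in>h. x \<noteq> 0 \<and> (\<forall>y\<in>h. tstar_form x y = 0))"

definition su2_automorphism :: "(su2 \<Rightarrow> su2) \<Rightarrow> bool" where
  "su2_automorphism F \<longleftrightarrow> linear F \<and> bij F \<and>
     (\<forall>u v. F (su2_bracket u v) = su2_bracket (F u) (F v))"

text \<open>T^*F (u + alpha) = F u + (F^{-1})^* alpha, where ((F^{-1})^* alpha)(v) = alpha(F^{-1} v).\<close>
definition tstar_map :: "(su2 \<Rightarrow> su2) \<Rightarrow> tsu2 \<Rightarrow> tsu2" where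
  "tstar_map F x = (case x of (u, \<alpha>) \<Rightarrow>
      (F u, \<chi> i. dual_apply \<alpha> (inv F (su2_e i))))"

end

theory Submission
  imports Defs
begin

text \<open>In coordinates the bracket of \<open>su(2)\<close> is the cross product and the coadjoint action is the
  adjoint action, so a subalgebra \<open>h\<close> projects onto a cross-product-closed subspace \<open>P\<close> of
  \<open>su(2)\<close>, while its intersection \<open>K\<close> with \<open>su(2)\<^sup>*\<close> is stable under crossing with \<open>P\<close>.
  A cross-product-closed subspace is either everything or contained in a line, and a nonzero
  subspace stable under crossing with everything is everything.  Since \<open>dim h = dim P + dim K\<close>,
  \<open>dim h \<ge> 4\<close> leaves only \<open>h = T\<^sup>* su(2)\<close> and \<open>h = \<real>u \<oplus> su(2)\<^sup>*\<close>; a rotation taking \<open>u\<close> to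
  a multiple of \<open>e\<^sub>1\<close> is an automorphism and finishes the proof.\<close>

unbundle no cross3_syntax

lemma su2_bracket_eq_cross3: "su2_bracket = cross3"
  by (intro ext) (simp add: su2_bracket_def cross3_def)

lemma coad_eq_cross3: "coad u \<alpha> = cross3 u \<alpha>"
  by (simp add: coad_def dual_apply_def su2_e_def su2_bracket_eq_cross3 cross3_simps forall_3 axis_def)

lemma tstar_bracket_Pair:
  "tstar_bracket (u, \<alpha>) (v, \<beta>) = (cross3 u v, cross3 u \<beta> - cross3 v \<alpha>)"
  by (simp add: tstar_bracket_def su2_bracket_eq_cross3 coad_eq_cross3)

lemma dim_eq_dim_fst_image_plus_dim_fibre_0:
  fixes h :: "('a::euclidean_space \<times> 'b::euclidean_space) set"
  assumes "subspace h"
  shows "dim h = dim (fst ` h) + dim {b. (0, b) \<in> h}"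
proof -
  define Z :: "('a \<times> 'b) set" where "Z = Pair 0 ` UNIV"
  define Pz where "Pz = (\<lambda>p. (p, 0::'b)) ` fst ` h"
  have lin1: "linear (\<lambda>p::'a. (p, 0::'b))" and lin2: "linear (Pair (0::'a) :: 'b \<Rightarrow> _)"
    by (simp_all add: linear_iff)
  have "subspace Z"
    unfolding Z_def by (rule linear_subspace_image[OF lin2 subspace_UNIV])
  have "subspace Pz"
    unfolding Pz_def by (intro linear_subspace_image[OF lin1] linear_subspace_image[OF linear_fst assms])
  have sums: "{x + y |x y. x \<in> h \<and> y \<in> Z} = {x + y |x y. x \<in> Pz \<and> y \<in> Z}"
  proof (intro set_eqI iffI)
    fix z assume "z \<in> {x + y |x y. x \<in> h \<and> y \<in> Z}"
    then obtain x y where "x \<in> h" "y \<in> Z" "z = x + y" by blast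
    then show "z \<in> {x + y |x y. x \<in> Pz \<and> y \<in> Z}"
      unfolding Pz_def Z_def
      by (intro CollectI exI[of _ "(fst x, 0)"] exI[of _ "(0, snd x + snd y)"]) (auto simp: prod_eq_iff)
  next
    fix z assume "z \<in> {x + y |x y. x \<in> Pz \<and> y \<in> Z}"
    then obtain x y where "x \<in> h" "y \<in> Z" "z = (fst x, 0) + y" unfolding Pz_def by blast
    then show "z \<in> {x + y |x y. x \<in> h \<and> y \<in> Z}"
      unfolding Z_def
      by (intro CollectI exI[of _ x] exI[of _ "(0, snd y - snd x)"]) (auto simp: prod_eq_iff)
  qed
  have "dim (Pz \<inter> Z) = 0"
    unfolding Pz_def Z_def by (auto simp: zero_prod_def)
  moreover have "dim Pz = dim (fst ` h)"
    unfolding Pz_def by (rule dim_image_eq[OF lin1]) (auto simp: inj_on_def)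
  moreover have "h \<inter> Z = Pair 0 ` {b. (0, b) \<in> h}"
    unfolding Z_def by auto
  then have "dim (h \<inter> Z) = dim {b. (0, b) \<in> h}"
    by (simp add: dim_image_eq[OF lin2] inj_on_def)
  ultimately show ?thesis
    using dim_sums_Int[OF assms \<open>subspace Z\<close>] dim_sums_Int[OF \<open>subspace Pz\<close> \<open>subspace Z\<close>]
    unfolding sums by linarith
qed

lemma subspace_eq_fst_image_Times_UNIV:
  fixes h :: "('a::real_vector \<times> 'b::real_vector) set"
  assumes "subspace h" and "\<And>b. (0, b) \<in> h"
  shows "h = fst ` h \<times> UNIV"
proof (intro set_eqI iffI)
  fix x :: "'a \<times> 'b" assume "x \<in> fst ` h \<times> UNIV"
  then obtain z where "z \<in> h" "fst z = fst x" by force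
  moreover have "z + (0, snd x - snd z) = x"
    using \<open>fst z = fst x\<close> by (simp add: prod_eq_iff)
  ultimately show "x \<in> h"
    by (metis assms subspace_add)
qed (force simp: mem_Times_iff)

lemma cross3_stable_subspace_eq_UNIV:
  fixes K :: "(real^3) set"
  assumes "subspace K" "b \<in> K" "b \<noteq> 0" and stable: "\<And>w c. c \<in> K \<Longrightarrow> cross3 w c \<in> K"
  shows "K = UNIV"
proof -
  have "x \<in> K" for x
  proof -
    have "(b \<bullet> x) *\<^sub>R b + cross3 b (cross3 x b) \<in> K"
      by (intro subspace_add subspace_scale stable assms)
    moreover have "(b \<bullet> x) *\<^sub>R b + cross3 b (cross3 x b) = (b \<bullet> b) *\<^sub>R x"
      by (simp add: cross3_simps forall_3)
    ultimately have "inverse (b \<bullet> b) *\<^sub>R ((b \<bullet> b) *\<^sub>R x) \<in> K"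
      using assms(1) subspace_scale by fastforce
    then show ?thesis using \<open>b \<noteq> 0\<close> by simp
  qed
  then show ?thesis by auto
qed

lemma cross3_closed_subspace_cases:
  fixes W :: "(real^3) set"
  assumes "subspace W" and closed: "\<And>a c. a \<in> W \<Longrightarrow> c \<in> W \<Longrightarrow> cross3 a c \<in> W"
  obtains "W = UNIV" | u where "W \<subseteq> span {u}"
proof (cases "\<exists>u\<in>W. \<exists>v\<in>W. cross3 u v \<noteq> 0")
  case True
  then obtain u v where uv: "u \<in> W" "v \<in> W" "cross3 u v \<noteq> 0" by blast
  define n where "n = cross3 u v"
  have "x \<in> W" for x
  proof -
    define y where "y = cross3 x n"
    \<comment> \<open>\<open>x\<close> is recovered from \<open>n = u \<times> v\<close> by expanding \<open>y \<times> n\<close> in two ways.\<close>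
    have "(n \<bullet> x) *\<^sub>R n - ((y \<bullet> v) *\<^sub>R u - (y \<bullet> u) *\<^sub>R v) \<in> W"
      unfolding n_def by (intro subspace_diff subspace_scale closed uv assms(1))
    moreover have "(n \<bullet> x) *\<^sub>R n - ((y \<bullet> v) *\<^sub>R u - (y \<bullet> u) *\<^sub>R v) = (n \<bullet> n) *\<^sub>R x"
      unfolding n_def y_def by (simp add: cross3_simps forall_3)
    ultimately have "inverse (n \<bullet> n) *\<^sub>R ((n \<bullet> n) *\<^sub>R x) \<in> W"
      using assms(1) subspace_scale by fastforce
    then show ?thesis using uv(3) unfolding n_def by simp
  qed
  then show thesis using that(1) by blast
next
  case False
  show thesis
  proof (cases "W \<subseteq> {0}")
    case True
    then show thesis using that(2)[of 0] by (auto simp: span_0)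
  next
    case False
    then obtain u where u: "u \<in> W" "u \<noteq> 0" by blast
    have "v \<in> span {u}" if "v \<in> W" for v
    proof -
      have "collinear {0, u, v}"
        using \<open>\<not> (\<exists>u\<in>W. \<exists>v\<in>W. cross3 u v \<noteq> 0)\<close> u(1) that cross_eq_0 by metis
      then have "v = 0 \<or> (\<exists>c. v = c *\<^sub>R u)"
        using u(2) collinear_lemma by blast
      then show ?thesis by (auto simp: span_0 span_mul span_base)
    qed
    then show thesis using that(2) by blast
  qed
qed

lemma dim_1_subspace_subset_span_singleton:
  fixes P :: "'a::euclidean_space set"
  assumes "subspace P" "P \<subseteq> span {u}" "dim P = 1"
  shows "u \<noteq> 0" "P = span {u}"
proof -
  show "u \<noteq> 0"
  proof
    assume "u = 0"
    then have "P \<subseteq> {0}"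
      using assms(2) by (simp add: span_0)
    then show False
      using assms(3) dim_eq_0 by (metis one_neq_zero)
  qed
  then have "span P = span (span {u})"
    by (intro dim_eq_span assms(2)) (simp add: assms(3))
  then show "P = span {u}"
    using assms(1) span_eq_iff span_span by metis
qed

lemma tstar_subalgebra_fst_image_cross3_closed:
  assumes "tstar_subalgebra h" "a \<in> fst ` h" "c \<in> fst ` h"
  shows "cross3 a c \<in> fst ` h"
proof -
  obtain x y where x: "x \<in> h" "a = fst x" and y: "y \<in> h" "c = fst y"
    using assms(2,3) by blast
  have "tstar_bracket x y \<in> h"
    using assms(1) x(1) y(1) unfolding tstar_subalgebra_def by blast
  moreover have "fst (tstar_bracket x y) = cross3 a c"
    using x(2) y(2) by (cases x, cases y) (simp add: tstar_bracket_Pair)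
  ultimately show ?thesis
    by (metis image_eqI)
qed

lemma tstar_subalgebra_fibre_0_cross3_stable:
  assumes "tstar_subalgebra h" "a \<in> fst ` h" "(0, c) \<in> h"
  shows "(0, cross3 a c) \<in> h"
proof -
  obtain x where x: "x \<in> h" "a = fst x"
    using assms(2) by blast
  have "tstar_bracket x (0, c) \<in> h"
    using assms(1,3) x(1) unfolding tstar_subalgebra_def by blast
  moreover have "tstar_bracket x (0, c) = (0, cross3 a c)"
    using x(2) by (cases x) (simp add: tstar_bracket_Pair)
  ultimately show ?thesis
    by simp
qed

lemma tstar_subalgebra_dim_ge_4_cases:
  assumes "tstar_subalgebra h" "dim h \<ge> 4"
  shows "dim h = 6 \<or> dim h = 4 \<and> (\<exists>u. u \<noteq> 0 \<and> h = span {u} \<times> UNIV)"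
proof -
  define P where "P = fst ` h"
  define K where "K = {b. (0::su2, b) \<in> h}"
  have "subspace h"
    using assms(1) unfolding tstar_subalgebra_def by blast
  have dim_h: "dim h = dim P + dim K"
    unfolding P_def K_def by (rule dim_eq_dim_fst_image_plus_dim_fibre_0[OF \<open>subspace h\<close>])
  have "subspace P"
    unfolding P_def by (rule linear_subspace_image[OF linear_fst \<open>subspace h\<close>])
  have "subspace K"
    using linear_subspace_vimage[OF _ \<open>subspace h\<close>, of "Pair 0"]
    unfolding K_def by (simp add: linear_iff vimage_def)
  have "dim P \<le> 3" "dim K \<le> 3"
    using dim_subset_UNIV[of P] dim_subset_UNIV[of K] by auto
  have "cross3 a c \<in> P" if "a \<in> P" "c \<in> P" for a c
    using tstar_subalgebra_fst_image_cross3_closed[OF assms(1)] that unfolding P_def by blast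
  then show ?thesis
  proof (rule cross3_closed_subspace_cases[OF \<open>subspace P\<close>])
    assume "P = UNIV"
    have "dim K \<noteq> 0"
      using dim_h \<open>dim P \<le> 3\<close> assms(2) by linarith
    then obtain b where "b \<in> K" "b \<noteq> 0"
      by (metis dim_eq_0 insertCI subsetI)
    moreover have "cross3 w c \<in> K" if "c \<in> K" for w c
      using tstar_subalgebra_fibre_0_cross3_stable[OF assms(1), of w c] that \<open>P = UNIV\<close>
      unfolding P_def K_def by simp
    ultimately have "K = UNIV"
      using cross3_stable_subspace_eq_UNIV[OF \<open>subspace K\<close>] by blast
    then show ?thesis
      using dim_h \<open>P = UNIV\<close> by simp
  next
    fix u assume "P \<subseteq> span {u}"
    then have "dim P \<le> 1"
      using dim_le_card[of P "{u}"] by simp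
    then have "dim K = 3" "dim P = 1" "dim h = 4"
      using dim_h \<open>dim K \<le> 3\<close> assms(2) by linarith+
    then have "span K = UNIV"
      using dim_eq_full[of K] by simp
    then have "K = UNIV"
      using \<open>subspace K\<close> span_eq_iff by metis
    then have "(0, b) \<in> h" for b
      unfolding K_def by blast
    then have "h = P \<times> UNIV"
      unfolding P_def by (rule subspace_eq_fst_image_Times_UNIV[OF \<open>subspace h\<close>])
    then show ?thesis
      using dim_1_subspace_subset_span_singleton[OF \<open>subspace P\<close> \<open>P \<subseteq> span {u}\<close> \<open>dim P = 1\<close>]
        \<open>dim h = 4\<close> by blast
  qed
qed

lemma span_singleton_scaleR:
  fixes x :: "'a::real_vector"
  assumes "c \<noteq> 0"
  shows "span {c *\<^sub>R x} = span {x}"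
  unfolding span_eq
proof
  have "x = inverse c *\<^sub>R (c *\<^sub>R x)"
    using assms by simp
  then show "{x} \<subseteq> span {c *\<^sub>R x}"
    by (metis span_base span_mul singletonI empty_subsetI insert_subset)
qed (simp add: span_base span_mul)

lemma tstar_map_orthogonal_transformation:
  assumes "orthogonal_transformation F"
  shows "tstar_map F = map_prod F F"
proof -
  have F_inner: "F a \<bullet> F b = a \<bullet> b" for a b
    using assms unfolding orthogonal_transformation_def by blast
  have F_inv: "F (inv F y) = y" for y
    using orthogonal_transformation_bij[OF assms] by (simp add: bij_is_surj surj_f_inv_f)
  have "dual_apply \<alpha> (inv F (su2_e i)) = F \<alpha> $ i" for \<alpha> i
  proof -
    have "dual_apply \<alpha> (inv F (su2_e i)) = F \<alpha> \<bullet> F (inv F (axis i 1))"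
      by (simp add: dual_apply_def su2_e_def F_inner)
    also have "\<dots> = F \<alpha> $ i"
      by (simp add: F_inv inner_axis)
    finally show ?thesis .
  qed
  then show ?thesis
    by (intro ext) (simp add: tstar_map_def vec_eq_iff split: prod.split)
qed

lemma rotation_su2_automorphism:
  assumes "orthogonal_transformation F" "det (matrix F) = 1"
  shows "su2_automorphism F"
  using assms cross_orthogonal_transformation[OF assms(1)]
  by (simp add: su2_automorphism_def su2_bracket_eq_cross3 orthogonal_transformation_bij
      orthogonal_transformation_linear)

lemma tstar_map_rotation_line_Times_UNIV:
  fixes u :: su2
  assumes "u \<noteq> 0"
  obtains F where "su2_automorphism F" "tstar_map F ` (span {u} \<times> UNIV) = span {su2_e 1} \<times> UNIV"
proof -
  have "2 \<le> CARD(3)" "norm u = norm (norm u *\<^sub>R su2_e 1)"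
    by (simp_all add: su2_e_def)
  then obtain F where F: "orthogonal_transformation F" "det (matrix F) = 1" "F u = norm u *\<^sub>R su2_e 1"
    by (rule rotation_exists)
  have "F ` span {u} = span {norm u *\<^sub>R su2_e 1}"
    using span_linear_image[OF orthogonal_transformation_linear[OF F(1)], of "{u}"] F(3) by simp
  also have "\<dots> = span {su2_e 1}"
    using assms by (simp add: span_singleton_scaleR)
  finally have "F ` span {u} = span {su2_e 1}" .
  moreover have "F ` UNIV = UNIV"
    using orthogonal_transformation_bij[OF F(1)] bij_is_surj by blast
  ultimately have "tstar_map F ` (span {u} \<times> UNIV) = span {su2_e 1} \<times> UNIV"
    unfolding tstar_map_orthogonal_transformation[OF F(1)] by (rule map_prod_surj_on)
  with F that rotation_su2_automorphism show thesis by blast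
qed

theorem mainTheorem12:
  shows "(\<nexists>h. tstar_subalgebra h \<and> dim h = 5) \<and>
         (\<forall>h. tstar_subalgebra h \<and> dim h = 4 \<and> tstar_degenerate h \<longrightarrow>
           (\<exists>F. su2_automorphism F \<and>
                tstar_map F ` h = {(t *\<^sub>R su2_e 1, \<alpha>) | t \<alpha>. True}))"
proof (intro conjI allI impI notI)
  assume "\<exists>h. tstar_subalgebra h \<and> dim h = 5"
  then show False
    using tstar_subalgebra_dim_ge_4_cases by fastforce
next
  fix h assume "tstar_subalgebra h \<and> dim h = 4 \<and> tstar_degenerate h"
  then obtain u where "u \<noteq> 0" "h = span {u} \<times> UNIV"
    using tstar_subalgebra_dim_ge_4_cases[of h] by auto
  moreover have "span {su2_e 1} \<times> UNIV = {(t *\<^sub>R su2_e 1, \<alpha>) | t \<alpha>. True}"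
    by (auto simp: span_singleton)
  ultimately show "\<exists>F. su2_automorphism F \<and> tstar_map F ` h = {(t *\<^sub>R su2_e 1, \<alpha>) | t \<alpha>. True}"
    using tstar_map_rotation_line_Times_UNIV by metis
qed

end
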